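(* Let $c>0$, $\alpha>0$, $\lambda>1$, $\varepsilon=\lambda-1$, let $r\le 1$ be a $(c,\alpha)$-Diophantine $\lambda$-radius function and $r'=\lambda r$. Let $V'\subset V\subset\mathbb C$ be open with $\delta(V',V)\ge\varepsilon$ and let $f=(f_n)$ be holomorphic sequences on $V(r)$ satisfying $\sup_{V(r)_n}|f_n|\le A\rho^n$ with $A>0$, $0<\rho<1$. Then the sum $S(f)$ is of Gevrey class $\alpha$ at each point $z_0\in\mathcal R(V'(r'))$: there exist constants $K,D>0$ (independent of $m$) such that $$\frac{1}{m!}\,|S(f^{(m)})(z_0)|\le K\,D^m\, m^{\alpha m}\qquad\text{for all } m\ge 1 .$$
   Context: Stacked space $\mathbb X=\mathbb N\times\mathbb P$ ($\mathbb N=\{1,2,\dots\}$), discrete pole set $\mathcal P\subset\mathbb X$, $P_n$ the poles on sheet $n$. Radius function: $r:\mathcal P\to\mathbb R_{>0}$ constant on each sheet (value $r_n$), closed discs of radius $r$ around distinct poles of a sheet disjoint; $\lambda$-radius function: $\lambda r$ is a radius function; $(c,\alpha)$-Diophantine: $r_n\ge c/n^\alpha$ for all $n$. $W(\rho)_n=\{z\in W:|z-a|\ge\rho_n\ \forall a\in P_n\}$, $\mathcal R(W(\rho))=\bigcap_nW(\rho)_n$; $S(g)=\sum_n g_n$; $f^{(m)}=(f_n^{(m)})$. Huygens distance $\delta(U,V)=\sup\{\rho:\ D(z,\rho)\subset V\ \forall z\in U\}$. *)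

theory Defs
  imports "HOL-Complex_Analysis.Complex_Analysis"
begin

text \<open>Stacked space: sheets indexed by n >= 1; P n is the set of poles on sheet n
  (a subset of the complex plane); a function on the pole set constant on sheets
  is represented by its sheet values r n.\<close>

definition discrete_poles :: "(nat \<Rightarrow> complex set) \<Rightarrow> bool" where
  "discrete_poles P \<longleftrightarrow> (\<forall>n\<ge>1. \<forall>z. \<not> z islimpt P n)"

definition radius_fun :: "(nat \<Rightarrow> complex set) \<Rightarrow> (nat \<Rightarrow> real) \<Rightarrow> bool" where
  "radius_fun P r \<longleftrightarrow> (\<forall>n\<ge>1. r n > 0 \<and>
      (\<forall>a\<in>P n. \<forall>b\<in>P n. a \<noteq> b \<longrightarrow> cball a (r n) \<inter> cball b (r n) = {}))"

definition lambda_radius_fun :: "real \<Rightarrow> (nat \<Rightarrow> complex set) \<Rightarrow> (nat \<Rightarrow> real) \<Rightarrow> bool" where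
  "lambda_radius_fun lam P r \<longleftrightarrow> radius_fun P r \<and> radius_fun P (\<lambda>n. lam * r n)"

definition diophantine :: "real \<Rightarrow> real \<Rightarrow> (nat \<Rightarrow> real) \<Rightarrow> bool" where
  "diophantine c \<alpha> r \<longleftrightarrow> (\<forall>n\<ge>1. r n \<ge> c / (real n powr \<alpha>))"

definition sheet_set :: "(nat \<Rightarrow> complex set) \<Rightarrow> complex set \<Rightarrow> (nat \<Rightarrow> real) \<Rightarrow> nat \<Rightarrow> complex set" where
  "sheet_set P W \<rho> n = {z \<in> W. \<forall>a\<in>P n. cmod (z - a) \<ge> \<rho> n}"

definition reg_set :: "(nat \<Rightarrow> complex set) \<Rightarrow> complex set \<Rightarrow> (nat \<Rightarrow> real) \<Rightarrow> complex set" where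
  "reg_set P W \<rho> = (\<Inter>n\<in>{1..}. sheet_set P W \<rho> n)"

text \<open>Huygens distance, valued in the extended reals (it is +infinity e.g. when V = UNIV)\<close>
definition huygens_dist :: "complex set \<Rightarrow> complex set \<Rightarrow> ereal" where
  "huygens_dist U V = Sup {ereal \<rho> | \<rho>. \<forall>z\<in>U. ball z \<rho> \<subseteq> V}"

end

theory Submission
  imports Defs
begin

text \<open>Around a point \<open>z\<^sub>0\<close> of \<open>\<R>(V'(\<lambda>r))\<close> the ball of radius \<open>\<epsilon> r\<^sub>n\<close> lies in \<open>V(r)\<^sub>n\<close>,
  so Cauchy's estimate bounds the \<open>m\<close>-th derivative of \<open>f\<^sub>n\<close> at \<open>z\<^sub>0\<close> by
  \<open>m! A \<rho>\<^sup>n (2/(\<epsilon> r\<^sub>n))\<^sup>m \<le> m! A \<rho>\<^sup>n (2/(\<epsilon> c))\<^sup>m n\<^sup>\<alpha>\<^sup>m\<close>. Writing \<open>\<rho>\<^sup>n = q\<^sup>n q\<^sup>n\<close> with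
  \<open>q = \<surd>\<rho>\<close>, one geometric factor absorbs the polynomial one: \<open>x\<^sup>k q\<^sup>x \<le> (k / (e ln (1/q)))\<^sup>k\<close>
  for \<open>x > 0\<close>, which for \<open>k = \<alpha> m\<close> has the shape \<open>E\<^sup>m m\<^sup>\<alpha>\<^sup>m\<close>. The remaining factors \<open>q\<^sup>n\<close> form a
  convergent geometric series.\<close>

lemma powr_mult_exp_le:
  fixes b k x :: real
  assumes "b > 0" "k > 0" "x > 0"
  shows "x powr k * exp (-b*x) \<le> (k/(b*exp 1)) powr k"
proof -
  have "ln (b*x/k) \<le> b*x/k - 1" using assms by (intro ln_le_minus_one) simp
  moreover have "ln (b*x/k) = ln b + ln x - ln k" using assms by (simp add: ln_div ln_mult)
  ultimately have "k*(ln b + ln x - ln k) \<le> k*(b*x/k - 1)"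
    using assms by (intro mult_left_mono) auto
  hence h: "k * ln x - b*x \<le> k * (ln k - ln b - 1)" using assms by (simp add: algebra_simps)
  have "x powr k * exp (-b*x) = exp (k * ln x - b*x)"
    using assms by (simp add: powr_def exp_diff exp_minus field_simps)
  also have "\<dots> \<le> exp (k * (ln k - ln b - 1))" using h by simp
  also have "\<dots> = (k/(b*exp 1)) powr k"
    using assms by (simp add: powr_def ln_div ln_mult algebra_simps)
  finally show ?thesis .
qed

lemma powr_mult_power_le_sqrt_power:
  fixes k \<rho> :: real and N :: nat
  assumes "k > 0" "0 < \<rho>" "\<rho> < 1"
  shows "real N powr k * \<rho> ^ N \<le> (2*k/(- ln \<rho> * exp 1)) powr k * sqrt \<rho> ^ N"
proof (cases "N = 0")
  case False
  define b where "b = - ln \<rho> / 2"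
  have b: "b > 0" using assms by (simp add: b_def)
  have "sqrt \<rho> ^ N = exp (ln (sqrt \<rho>)) ^ N" using assms by simp
  also have "\<dots> = exp (- b * real N)"
    using assms by (simp add: b_def ln_sqrt exp_of_nat_mult[symmetric] algebra_simps)
  finally have sqrt_pow: "sqrt \<rho> ^ N = exp (- b * real N)" .
  have "\<rho> ^ N = sqrt \<rho> ^ N * sqrt \<rho> ^ N"
    using assms by (simp add: power_mult_distrib[symmetric])
  hence "real N powr k * \<rho> ^ N = (real N powr k * exp (- b * real N)) * sqrt \<rho> ^ N"
    by (simp add: sqrt_pow mult_ac)
  also have "\<dots> \<le> (k/(b*exp 1)) powr k * sqrt \<rho> ^ N"
    using powr_mult_exp_le[OF b \<open>k > 0\<close>, of "real N"] False assms
    by (intro mult_right_mono) auto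
  also have "k/(b*exp 1) = 2*k/(- ln \<rho> * exp 1)" by (simp add: b_def)
  finally show ?thesis .
qed (use assms in auto)

lemma ball_subset_of_huygens_dist:
  assumes "z \<in> U" "huygens_dist U V \<ge> ereal e"
  shows "ball z e \<subseteq> V"
proof
  fix w assume "w \<in> ball z e"
  hence "ereal (dist z w) < ereal e" by simp
  hence "ereal (dist z w) < huygens_dist U V" using assms(2) by (rule less_le_trans)
  then obtain s where "\<forall>u\<in>U. ball u s \<subseteq> V" "dist z w < s"
    unfolding huygens_dist_def less_Sup_iff by auto
  thus "w \<in> V" using assms(1) by (meson mem_ball subsetD)
qed

lemma ball_subset_sheet_set:
  assumes "ball z d \<subseteq> W" "\<forall>a\<in>P n. cmod (z - a) \<ge> \<rho> n + d"
  shows "ball z d \<subseteq> sheet_set P W \<rho> n"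
proof
  fix w assume w: "w \<in> ball z d"
  have "cmod (w - a) \<ge> \<rho> n" if "a \<in> P n" for a
    using assms(2) that w norm_triangle_ineq[of "z - w" "w - a"] by (force simp: dist_norm)
  thus "w \<in> sheet_set P W \<rho> n" using w assms(1) by (auto simp: sheet_set_def)
qed

lemma ball_subset_sheet_set_of_reg_set:
  assumes "z \<in> reg_set P U (\<lambda>n. lam * r n)" "huygens_dist U V \<ge> ereal (lam - 1)"
    and "lam \<ge> 1" "n \<ge> 1" "r n \<le> 1"
  shows "ball z ((lam - 1) * r n) \<subseteq> sheet_set P V r n"
proof (rule ball_subset_sheet_set)
  have "ball z ((lam - 1) * r n) \<subseteq> ball z (lam - 1)"
    using assms(3,5) by (intro subset_ball) (simp add: mult_left_le)
  also have "\<dots> \<subseteq> V"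
    using assms(1,2) by (intro ball_subset_of_huygens_dist) (auto simp: reg_set_def sheet_set_def)
  finally show "ball z ((lam - 1) * r n) \<subseteq> V" .
  show "\<forall>a\<in>P n. cmod (z - a) \<ge> r n + (lam - 1) * r n"
    using assms(1,4) by (auto simp: reg_set_def sheet_set_def algebra_simps)
qed

lemma Cauchy_inequality_ball:
  fixes f :: "complex \<Rightarrow> complex"
  assumes "f holomorphic_on ball z s" "s > 0" "\<forall>w\<in>ball z s. cmod (f w) \<le> M"
  shows "cmod ((deriv ^^ m) f z) \<le> fact m * M * (2/s) ^ m"
proof -
  have sub: "cball z (s/2) \<subseteq> ball z s" using assms(2) by (simp add: cball_subset_ball_iff)
  have "cmod ((deriv ^^ m) f z) \<le> fact m * M / (s/2) ^ m"
  proof (rule Cauchy_inequality)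
    show "f holomorphic_on ball z (s/2)"
      using assms(1) sub ball_subset_cball holomorphic_on_subset by blast
    show "continuous_on (cball z (s/2)) f"
      using assms(1) sub holomorphic_on_imp_continuous_on continuous_on_subset by blast
    show "cmod (f w) \<le> M" if "cmod (z - w) = s/2" for w
      using assms(3) sub that by (auto simp: dist_norm)
  qed (use assms(2) in simp)
  thus ?thesis by (simp add: power_divide field_simps)
qed

lemma deriv_bound_diophantine_sheet:
  fixes g :: "complex \<Rightarrow> complex" and N m :: nat
  assumes "g holomorphic_on ball z (\<epsilon> * s)" "\<forall>w\<in>ball z (\<epsilon> * s). cmod (g w) \<le> A * \<rho> ^ N"
    and "\<epsilon> > 0" "c > 0" "\<alpha> > 0" "A > 0" "0 < \<rho>" "\<rho> < 1" "m \<ge> 1" "N \<ge> 1"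
    and "s \<ge> c / real N powr \<alpha>"
  shows "cmod ((deriv ^^ m) g z) \<le>
    fact m * A * ((2/(\<epsilon>*c)) * (2*\<alpha>/(- ln \<rho> * exp 1)) powr \<alpha>) ^ m
      * real m powr (\<alpha> * real m) * sqrt \<rho> ^ N"
proof -
  define B where "B = 2*\<alpha>/(- ln \<rho> * exp 1)"
  have "- ln \<rho> * exp 1 > 0" using assms(7,8) by (simp add: mult_neg_pos)
  hence "B > 0" using assms(5) unfolding B_def by (intro divide_pos_pos) auto
  have Npos: "real N powr \<alpha> > 0" using assms(10) by simp
  have lower: "\<epsilon> * (c / real N powr \<alpha>) > 0" using assms(3,4) Npos by simp
  have le: "\<epsilon> * (c / real N powr \<alpha>) \<le> \<epsilon> * s" using assms(3,11) by (intro mult_left_mono) auto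
  hence s: "\<epsilon> * s > 0" using lower by linarith
  have "2/(\<epsilon> * s) \<le> 2/(\<epsilon> * (c / real N powr \<alpha>))"
    by (meson divide_left_mono le lower s mult_pos_pos zero_le_numeral)
  also have "\<dots> = (2/(\<epsilon>*c)) * real N powr \<alpha>" using Npos by simp
  finally have "(2/(\<epsilon> * s)) ^ m \<le> ((2/(\<epsilon>*c)) * real N powr \<alpha>) ^ m"
    using s by (intro power_mono) auto
  also have "\<dots> = (2/(\<epsilon>*c)) ^ m * real N powr (\<alpha> * real m)"
    using powr_power[of "real N" \<alpha> m] assms(10) by (simp only: power_mult_distrib mult.commute)
  finally have radius: "(2/(\<epsilon> * s)) ^ m \<le> (2/(\<epsilon>*c)) ^ m * real N powr (\<alpha> * real m)" .
  have "real N powr (\<alpha> * real m) * \<rho> ^ N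
        \<le> (2*(\<alpha> * real m)/(- ln \<rho> * exp 1)) powr (\<alpha> * real m) * sqrt \<rho> ^ N"
    using assms(5,7,8,9) by (intro powr_mult_power_le_sqrt_power) auto
  also have "(2*(\<alpha> * real m)/(- ln \<rho> * exp 1)) powr (\<alpha> * real m)
             = (B powr \<alpha>) ^ m * real m powr (\<alpha> * real m)"
  proof -
    have "2*(\<alpha> * real m)/(- ln \<rho> * exp 1) = B * real m" by (simp add: B_def)
    hence "(2*(\<alpha> * real m)/(- ln \<rho> * exp 1)) powr (\<alpha> * real m)
           = B powr (\<alpha> * real m) * real m powr (\<alpha> * real m)"
      using \<open>B > 0\<close> by (simp add: powr_mult)
    also have "B powr (\<alpha> * real m) = (B powr \<alpha>) ^ m"
      using \<open>B > 0\<close> by (simp add: powr_power mult.commute)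
    finally show ?thesis .
  qed
  finally have decay: "real N powr (\<alpha> * real m) * \<rho> ^ N
    \<le> (B powr \<alpha>) ^ m * real m powr (\<alpha> * real m) * sqrt \<rho> ^ N" .
  have "cmod ((deriv ^^ m) g z) \<le> fact m * (A * \<rho> ^ N) * (2/(\<epsilon> * s)) ^ m"
    using Cauchy_inequality_ball[OF assms(1) s assms(2)] .
  also have "\<dots> \<le> fact m * A * (2/(\<epsilon>*c)) ^ m * (real N powr (\<alpha> * real m) * \<rho> ^ N)"
    using radius assms(6,7) by (simp add: mult_left_mono mult_ac)
  also have "\<dots> \<le> fact m * A * (2/(\<epsilon>*c)) ^ m
                     * ((B powr \<alpha>) ^ m * real m powr (\<alpha> * real m) * sqrt \<rho> ^ N)"
    using decay assms(3,4,6) by (intro mult_left_mono) auto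
  finally show ?thesis unfolding B_def by (simp only: power_mult_distrib mult_ac)
qed

lemma summable_norm_suminf_le_geometric:
  fixes a :: "nat \<Rightarrow> 'a::banach"
  assumes "\<And>n. norm (a n) \<le> C * q ^ Suc n" "0 \<le> q" "q < 1"
  shows "summable a \<and> norm (\<Sum>n. a n) \<le> C * q / (1 - q)"
proof -
  have "(\<lambda>n. C * q * q ^ n) sums (C * q * (1 / (1 - q)))"
    using assms(2,3) by (intro sums_mult geometric_sums) auto
  hence geo: "(\<lambda>n. C * q ^ Suc n) sums (C * q / (1 - q))" by (simp add: mult_ac)
  have "summable a" using assms(1) geo by (blast intro: summable_comparison_test' sums_summable)
  moreover have "norm (\<Sum>n. a n) \<le> C * q / (1 - q)"
    using norm_suminf_le[OF assms(1) sums_summable[OF geo]] geo by (simp add: sums_iff)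
  ultimately show ?thesis ..
qed

theorem lemmaL:
  fixes c \<alpha> lam \<epsilon> A \<rho> :: real
    and P :: "nat \<Rightarrow> complex set" and r :: "nat \<Rightarrow> real"
    and V V' :: "complex set" and f :: "nat \<Rightarrow> complex \<Rightarrow> complex"
  assumes "c > 0" "\<alpha> > 0" "lam > 1" "\<epsilon> = lam - 1"
    and "discrete_poles P"
    and "lambda_radius_fun lam P r" "diophantine c \<alpha> r" "\<forall>n\<ge>1. r n \<le> 1"
    and "open V" "open V'" "V' \<subseteq> V" "huygens_dist V' V \<ge> ereal \<epsilon>"
    and "A > 0" "0 < \<rho>" "\<rho> < 1"
    and "\<forall>n\<ge>1. f n holomorphic_on sheet_set P V r n"
    and "\<forall>n\<ge>1. \<forall>z\<in>sheet_set P V r n. cmod (f n z) \<le> A * \<rho> ^ n"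
  shows "\<forall>z0\<in>reg_set P V' (\<lambda>n. lam * r n).
           \<exists>K D. K > 0 \<and> D > 0 \<and>
             (\<forall>m\<ge>1. summable (\<lambda>n. (deriv ^^ m) (f (Suc n)) z0) \<and>
                 cmod (\<Sum>n. (deriv ^^ m) (f (Suc n)) z0) / fact m
                   \<le> K * D ^ m * real m powr (\<alpha> * real m))"
proof
  fix z0 assume z0: "z0 \<in> reg_set P V' (\<lambda>n. lam * r n)"
  define q where "q = sqrt \<rho>"
  define D where "D = (2/(\<epsilon>*c)) * (2*\<alpha>/(- ln \<rho> * exp 1)) powr \<alpha>"
  have q: "0 < q" "q < 1" using assms(14,15) by (auto simp: q_def)
  have sheet_ball: "ball z0 (\<epsilon> * r N) \<subseteq> sheet_set P V r N" if "N \<ge> 1" for N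
    using ball_subset_sheet_set_of_reg_set[OF z0, of V N] assms(3,4,8,12) that by simp
  have deriv_term_bound: "cmod ((deriv ^^ m) (f (Suc n)) z0)
      \<le> fact m * A * D ^ m * real m powr (\<alpha> * real m) * q ^ Suc n"
    if "m \<ge> 1" for m n
    unfolding D_def q_def
  proof (rule deriv_bound_diophantine_sheet)
    show "f (Suc n) holomorphic_on ball z0 (\<epsilon> * r (Suc n))"
      using assms(16) sheet_ball[of "Suc n"] by (auto intro: holomorphic_on_subset)
    show "\<forall>w\<in>ball z0 (\<epsilon> * r (Suc n)). cmod (f (Suc n) w) \<le> A * \<rho> ^ Suc n"
      using assms(17)[rule_format, of "Suc n"] sheet_ball[of "Suc n"] by auto
    show "r (Suc n) \<ge> c / real (Suc n) powr \<alpha>"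
      using assms(7)[unfolded diophantine_def, rule_format, of "Suc n"] by simp
  qed (use assms(1-4,13-15) that in auto)
  show "\<exists>K D. K > 0 \<and> D > 0 \<and> (\<forall>m\<ge>1. summable (\<lambda>n. (deriv ^^ m) (f (Suc n)) z0) \<and>
          cmod (\<Sum>n. (deriv ^^ m) (f (Suc n)) z0) / fact m \<le> K * D ^ m * real m powr (\<alpha> * real m))"
  proof (rule exI[of _ "A * q / (1 - q)"], rule exI[of _ D], intro conjI allI impI)
    show "A * q / (1 - q) > 0" using q assms(13) by simp
    show "D > 0" using assms(1-4,14,15) ln_less_zero[of \<rho>] by (simp add: D_def)
    fix m :: nat assume "m \<ge> 1"
    from summable_norm_suminf_le_geometric[OF deriv_term_bound[OF this]] q
    show "summable (\<lambda>n. (deriv ^^ m) (f (Suc n)) z0)"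
      and "cmod (\<Sum>n. (deriv ^^ m) (f (Suc n)) z0) / fact m
             \<le> A * q / (1 - q) * D ^ m * real m powr (\<alpha> * real m)"
      by (auto simp: divide_le_eq mult_ac)
  qed
qed

end
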